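(* Let $p$ be a prime and $n=p^2$. Let $G=\mathrm{Circ}(a_0,\ldots,a_{n-1})$ be a Hermitian circulant with universal perfect state transfer. Then $a_j\neq 0$ for all $j\neq 0$.
   Context: $\mathrm{Circ}(a_0,\ldots,a_{n-1})$ denotes the $n\times n$ matrix $C$ with $C_{j,k}=a_{k-j}$ (indices mod $n$). A graph with Hermitian adjacency matrix $A$ has universal perfect state transfer if for every pair of vertices $v,w$ there is $t>0$ with $|\langle w|e^{-\mathtt{i} At}|v\rangle|=1$. *)

theory Defs
  imports "Jordan_Normal_Form.Matrix" "HOL-Computational_Algebra.Primes"
begin

definition circ :: "nat \<Rightarrow> (nat \<Rightarrow> complex) \<Rightarrow> complex mat" where
  "circ n a = mat n n (\<lambda>(j,k). a ((k + n - j) mod n))"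

definition hermitian_mat :: "complex mat \<Rightarrow> bool" where
  "hermitian_mat A \<longleftrightarrow> dim_row A = dim_col A \<and>
     (\<forall>j<dim_row A. \<forall>k<dim_row A. A $$ (j,k) = cnj (A $$ (k,j)))"

definition mat_exp :: "complex mat \<Rightarrow> complex mat" where
  "mat_exp M = mat (dim_row M) (dim_col M)
     (\<lambda>(i,j). (\<Sum>k. (M ^\<^sub>m k) $$ (i,j) / of_nat (fact k)))"

definition universal_PST :: "complex mat \<Rightarrow> bool" where
  "universal_PST A \<longleftrightarrow> (\<forall>v<dim_row A. \<forall>w<dim_row A. v \<noteq> w \<longrightarrow>
     (\<exists>t::real. t > 0 \<and>
        cmod (mat_exp ((- \<i> * complex_of_real t) \<cdot>\<^sub>m A) $$ (w,v)) = 1))"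

end

(* The circulant A is diagonalised by the Fourier vectors (\<omega>^(k i))_i, \<omega> = e^(2\<pi>i/n), with
   eigenvalues \<lambda>_k = \<Sum>_e a_e \<omega>^(k e), which are real since A is Hermitian. The (1,0) entry of
   e^(-itA) is the mean of the unit numbers e^(-it\<lambda>_k) \<omega>^k, so perfect state transfer from 0 to 1
   forces them to be equal: \<lambda>_k = \<lambda>_0 + c (k - n N_k) with c = 2\<pi>/(nt) \<noteq> 0 and integers N_k.
   If a_j = 0 with 0 < j < n, Fourier inversion 0 = n a_j = \<Sum>_k \<lambda>_k \<zeta>^k with \<zeta> = \<omega>^(-j) \<noteq> 1,
   together with (\<zeta> - 1) \<Sum>_k k \<zeta>^k = n, makes \<zeta> - 1 a unit of \<int>[\<zeta>]. For n = p^m this is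
   impossible: (\<zeta> - 1)^n \<in> p \<int>[\<zeta>] since p divides the inner binomial coefficients, and p is not
   a unit of \<int>[\<zeta>]. *)

theory Submission
  imports Defs "Jordan_Normal_Form.Char_Poly" "HOL-Number_Theory.Cong"
begin

section \<open>Roots of unity\<close>

lemma cis_eq_1_imp_multiple_2pi:
  assumes "cis \<theta> = 1"
  obtains m :: int where "\<theta> = 2 * pi * real_of_int m"
proof -
  have "cos \<theta> = 1" using assms by (simp add: complex_eq_iff)
  then obtain m :: int where "\<theta> = real_of_int m * 2 * pi" using cos_one_2pi_int by blast
  then show ?thesis using that by (simp add: mult_ac)
qed

definition unit_root :: "nat \<Rightarrow> complex" where
  "unit_root n = cis (2 * pi / real n)"

lemma unit_root_power: "unit_root n ^ k = cis (2 * pi * real k / real n)"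
  unfolding unit_root_def DeMoivre by (simp add: field_simps)

lemma unit_root_power_eq_1_iff:
  assumes "n > 0"
  shows "unit_root n ^ k = 1 \<longleftrightarrow> n dvd k"
proof
  assume "unit_root n ^ k = 1"
  then obtain m :: int where "2 * pi * real k / real n = 2 * pi * real_of_int m"
    unfolding unit_root_power by (rule cis_eq_1_imp_multiple_2pi)
  then have "real_of_int (int k) = real_of_int (m * int n)" using assms by (simp add: field_simps)
  then have "int k = m * int n" by (simp only: of_int_eq_iff)
  then show "n dvd k" by (metis dvd_triv_right int_dvd_int_iff)
next
  assume "n dvd k"
  then obtain m where "k = n * m" ..
  then have "unit_root n ^ k = (unit_root n ^ n) ^ m" by (simp add: power_mult)
  also have "unit_root n ^ n = 1" using assms by (simp add: unit_root_power)
  finally show "unit_root n ^ k = 1" by simp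
qed

lemma unit_root_power_power_eq_1: "(unit_root n ^ k) ^ n = 1"
  by (cases "n = 0") (simp_all add: power_mult[symmetric] unit_root_power_eq_1_iff)

lemma power_mod_eq_if_power_eq_1:
  fixes z :: "'a :: monoid_mult"
  assumes "z ^ n = 1"
  shows "z ^ (m mod n) = z ^ m"
proof -
  have "z ^ m = (z ^ n) ^ (m div n) * z ^ (m mod n)"
    by (metis mult_div_mod_eq power_add power_mult)
  then show ?thesis using assms by simp
qed

lemma sum_powers_root_of_unity:
  fixes z :: "'a :: field"
  assumes "z ^ n = 1" "z \<noteq> 1"
  shows "(\<Sum>k<n. z ^ k) = 0"
  using geometric_sum[OF assms(2), of n] assms(1) by simp

lemma sum_powers_unit_root_power:
  assumes "l < n"
  shows "(\<Sum>k<n. (unit_root n ^ l) ^ k) = (if l = 0 then of_nat n else 0)"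
proof (cases "l = 0")
  case False
  then have "unit_root n ^ l \<noteq> 1"
    using assms by (simp add: unit_root_power_eq_1_iff nat_dvd_not_less)
  then show ?thesis using False sum_powers_root_of_unity[OF unit_root_power_power_eq_1] by simp
qed simp

lemma sub_one_mult_sum_index_powers:
  fixes z :: "'a :: field"
  assumes "z ^ n = 1" "z \<noteq> 1"
  shows "(z - 1) * (\<Sum>k<n. of_nat k * z ^ k) = of_nat n"
proof -
  have "(z - 1) * (\<Sum>k<m. of_nat k * z ^ k) = (of_nat m - 1) * z ^ m + 1 - (\<Sum>k<m. z ^ k)" for m
    by (induction m) (auto simp: algebra_simps)
  then show ?thesis using assms sum_powers_root_of_unity by simp
qed

lemma add_diff_mod_eq_0_iff:
  fixes i j n :: nat
  assumes "i < n" "j < n"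
  shows "(j + n - i) mod n = 0 \<longleftrightarrow> i = j"
proof
  assume h: "(j + n - i) mod n = 0"
  show "i = j"
  proof (cases "i \<le> j")
    case True
    then have "j + n - i = j - i + n" by arith
    then have "(j + n - i) mod n = (j - i + n) mod n" by simp
    also have "\<dots> = j - i" using assms by simp
    finally show ?thesis using h True by simp
  next
    case False
    then have "(j + n - i) mod n = j + n - i" using assms by (intro mod_less) simp
    then show ?thesis using h False assms by simp
  qed
qed simp

section \<open>Spectrum of a circulant\<close>

definition fourier_vec :: "nat \<Rightarrow> complex \<Rightarrow> complex vec" where
  "fourier_vec n z = vec n (\<lambda>i. z ^ i)"

definition circ_eigenvalue :: "nat \<Rightarrow> (nat \<Rightarrow> complex) \<Rightarrow> complex \<Rightarrow> complex" where
  "circ_eigenvalue n a z = (\<Sum>e<n. a e * z ^ e)"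

lemma circ_carrier_mat [simp]: "circ n a \<in> carrier_mat n n"
  unfolding circ_def by simp

lemma circ_mult_fourier_vec:
  assumes z: "z ^ n = 1"
  shows "circ n a *\<^sub>v fourier_vec n z = circ_eigenvalue n a z \<cdot>\<^sub>v fourier_vec n z"
proof (rule eq_vecI)
  fix i assume "i < dim_vec (circ_eigenvalue n a z \<cdot>\<^sub>v fourier_vec n z)"
  then have i: "i < n" by (simp add: fourier_vec_def)
  have "(circ n a *\<^sub>v fourier_vec n z) $ i = (\<Sum>l<n. a ((l + n - i) mod n) * z ^ l)"
    using i by (simp add: circ_def fourier_vec_def scalar_prod_def lessThan_atLeast0 mult.commute)
  also have "\<dots> = (\<Sum>e<n. a e * z ^ (e + i))"
  proof (rule sum.reindex_bij_witness[of _ "\<lambda>e. (e + i) mod n" "\<lambda>l. (l + n - i) mod n"])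
    fix l assume l: "l \<in> {..<n}"
    show inv: "((l + n - i) mod n + i) mod n = l"
      using i l by (simp add: mod_add_left_eq)
    show "(l + n - i) mod n \<in> {..<n}" using i by simp
    have "z ^ ((l + n - i) mod n + i) = z ^ l"
      using inv power_mod_eq_if_power_eq_1[OF z] by metis
    then show "a ((l + n - i) mod n) * z ^ ((l + n - i) mod n + i) = a ((l + n - i) mod n) * z ^ l"
      by simp
  next
    fix e assume e: "e \<in> {..<n}"
    have "((e + i) mod n + n - i) mod n = ((e + i) mod n + (n - i)) mod n" using i by simp
    also have "\<dots> = (e + i + (n - i)) mod n" by (simp add: mod_add_left_eq)
    also have "\<dots> = e" using e i by simp
    finally show "((e + i) mod n + n - i) mod n = e" using e by simp
    show "(e + i) mod n \<in> {..<n}" using i by simp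
  qed
  also have "\<dots> = circ_eigenvalue n a z * z ^ i"
    unfolding circ_eigenvalue_def sum_distrib_right by (simp add: power_add mult.assoc)
  finally show "(circ n a *\<^sub>v fourier_vec n z) $ i = (circ_eigenvalue n a z \<cdot>\<^sub>v fourier_vec n z) $ i"
    using i by (simp add: fourier_vec_def)
qed (simp add: circ_def fourier_vec_def)

lemma fourier_vec_neq_0:
  assumes "n > 0"
  shows "fourier_vec n z \<noteq> 0\<^sub>v n"
proof -
  have "fourier_vec n z $ 0 \<noteq> 0\<^sub>v n $ 0" using assms by (simp add: fourier_vec_def)
  then show ?thesis by metis
qed

lemma eigenvector_circ_fourier_vec:
  assumes "n > 0" "z ^ n = 1"
  shows "eigenvector (circ n a) (fourier_vec n z) (circ_eigenvalue n a z)"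
  using circ_mult_fourier_vec[OF assms(2)] fourier_vec_neq_0[OF assms(1)]
  by (simp add: eigenvector_def circ_def fourier_vec_def)

lemma hermitian_circD:
  assumes "hermitian_mat (circ n a)" "e < n"
  shows "a ((n - e) mod n) = cnj (a e)"
proof -
  have dim: "dim_row (circ n a) = n" by (simp add: circ_def)
  have "circ n a $$ (e, 0) = cnj (circ n a $$ (0, e))"
    using assms(1)[unfolded hermitian_mat_def dim] assms(2) by (metis gr_zeroI not_less_zero)
  moreover have "circ n a $$ (e, 0) = a ((n - e) mod n)" "circ n a $$ (0, e) = a e"
    using assms(2) by (simp_all add: circ_def)
  ultimately show ?thesis by simp
qed

lemma circ_eigenvalue_real:
  assumes herm: "hermitian_mat (circ n a)" and z: "z ^ n = 1"
  shows "circ_eigenvalue n a z \<in> \<real>"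
proof (cases "n = 0")
  case False
  have "cmod z ^ n = 1" using z by (metis norm_one norm_power)
  then have "cmod z = 1" using False power_eq_imp_eq_base[of "cmod z" n 1] by simp
  then have unit: "cnj z * z = 1" by (metis complex_norm_square mult.commute of_real_1 power_one)
  have cnj_power: "cnj z ^ e = z ^ ((n - e) mod n)" if "e < n" for e
  proof -
    have "z ^ ((n - e) mod n) * z ^ e = 1"
      using z that by (simp add: power_mod_eq_if_power_eq_1 power_add[symmetric])
    moreover have "cnj z ^ e * z ^ e = 1" using unit by (simp add: power_mult_distrib[symmetric])
    moreover have "z ^ e \<noteq> 0" using unit by auto
    ultimately show ?thesis by (metis mult_cancel_right)
  qed
  have reflect: "(n - (n - e) mod n) mod n = e" if "e < n" for e
    using that by (cases "e = 0") (auto simp: mod_if)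
  have "cnj (circ_eigenvalue n a z) = (\<Sum>e<n. a ((n - e) mod n) * z ^ ((n - e) mod n))"
    unfolding circ_eigenvalue_def cnj_sum
    by (intro sum.cong refl) (simp add: hermitian_circD[OF herm] cnj_power)
  also have "\<dots> = circ_eigenvalue n a z"
    unfolding circ_eigenvalue_def
    by (rule sum.reindex_bij_witness[of _ "\<lambda>e. (n - e) mod n" "\<lambda>e. (n - e) mod n"])
      (use False reflect in auto)
  finally show ?thesis by (simp add: Reals_cnj_iff)
qed (simp add: circ_eigenvalue_def)

lemma circ_eigenvalue_inversion:
  assumes j: "j < n"
  shows "(\<Sum>k<n. circ_eigenvalue n a (unit_root n ^ k) * (unit_root n ^ (n - j)) ^ k)
    = of_nat n * a j"
proof -
  let ?\<omega> = "unit_root n"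
  have twist: "(?\<omega> ^ k) ^ e * (?\<omega> ^ (n - j)) ^ k = (?\<omega> ^ ((e + n - j) mod n)) ^ k" for k e
  proof -
    have "(?\<omega> ^ k) ^ e * (?\<omega> ^ (n - j)) ^ k = (?\<omega> ^ (e + n - j)) ^ k"
      using j by (simp only: power_mult[symmetric] power_add[symmetric])
        (simp add: algebra_simps Nat.add_diff_assoc)
    also have "\<dots> = (?\<omega> ^ ((e + n - j) mod n)) ^ k"
      using power_mod_eq_if_power_eq_1[OF unit_root_power_power_eq_1[of n 1]] by simp
    finally show ?thesis .
  qed
  have "(\<Sum>k<n. circ_eigenvalue n a (?\<omega> ^ k) * (?\<omega> ^ (n - j)) ^ k)
      = (\<Sum>e<n. a e * (\<Sum>k<n. (?\<omega> ^ ((e + n - j) mod n)) ^ k))"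
    unfolding circ_eigenvalue_def sum_distrib_right sum_distrib_left
    by (subst sum.swap) (simp only: mult.assoc twist)
  also have "\<dots> = (\<Sum>e<n. if e = j then a e * of_nat n else 0)"
    using j by (intro sum.cong refl)
      (simp add: sum_powers_unit_root_power add_diff_mod_eq_0_iff eq_commute[of j])
  also have "\<dots> = of_nat n * a j" using j by (simp add: mult.commute)
  finally show ?thesis .
qed

section \<open>Matrix exponential\<close>

lemma norm_power_mat_entry_le:
  assumes M: "(M :: complex mat) \<in> carrier_mat n n"
    and K: "\<And>i j. i < n \<Longrightarrow> j < n \<Longrightarrow> cmod (M $$ (i, j)) \<le> K"
    and i: "i < n" and j: "j < n"
  shows "cmod ((M ^\<^sub>m k) $$ (i, j)) \<le> (real n * K) ^ k"
  using i j
proof (induction k arbitrary: i j)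
  case 0
  then show ?case using M by (simp add: one_mat_def)
next
  case (Suc k)
  have K0: "0 \<le> K" using K[OF Suc.prems] norm_ge_zero order_trans by blast
  have "(M ^\<^sub>m Suc k) $$ (i, j) = (\<Sum>l\<in>{0..<n}. (M ^\<^sub>m k) $$ (i, l) * M $$ (l, j))"
    using M Suc.prems by (simp add: scalar_prod_def)
  also have "cmod \<dots> \<le> (\<Sum>l\<in>{0..<n}. (real n * K) ^ k * K)"
  proof (rule order.trans[OF norm_sum sum_mono])
    fix l assume "l \<in> {0..<n}"
    then show "cmod ((M ^\<^sub>m k) $$ (i, l) * M $$ (l, j)) \<le> (real n * K) ^ k * K"
      unfolding norm_mult using Suc K K0 by (intro mult_mono) auto
  qed
  also have "\<dots> = (real n * K) ^ Suc k" by simp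
  finally show ?case .
qed

lemma summable_mat_exp_entry:
  assumes M: "(M :: complex mat) \<in> carrier_mat n n" and i: "i < n" and j: "j < n"
  shows "summable (\<lambda>k. (M ^\<^sub>m k) $$ (i, j) / of_nat (fact k))"
proof (rule summable_comparison_test)
  define K where "K = (\<Sum>a<n. \<Sum>b<n. cmod (M $$ (a, b)))"
  have K: "cmod (M $$ (a, b)) \<le> K" if "a < n" "b < n" for a b
    unfolding K_def using that
    by (intro order.trans[OF member_le_sum member_le_sum[of a]]) (auto intro: sum_nonneg)
  show "\<exists>N. \<forall>k\<ge>N. norm ((M ^\<^sub>m k) $$ (i, j) / of_nat (fact k)) \<le> inverse (fact k) * (real n * K) ^ k"
    using norm_power_mat_entry_le[OF M K i j]
    by (auto simp: norm_divide divide_simps mult.commute)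
  show "summable (\<lambda>k. inverse (fact k) * (real n * K) ^ k)" by (rule summable_exp)
qed

lemma eigenvector_mat_exp:
  assumes M: "(M :: complex mat) \<in> carrier_mat n n" and ev: "eigenvector M v \<mu>"
  shows "eigenvector (mat_exp M) v (exp \<mu>)"
proof -
  have v: "v \<in> carrier_vec n" and "v \<noteq> 0\<^sub>v n" using ev M by (auto simp: eigenvector_def)
  moreover have "mat_exp M *\<^sub>v v = exp \<mu> \<cdot>\<^sub>v v"
  proof (rule eq_vecI)
    fix i assume "i < dim_vec (exp \<mu> \<cdot>\<^sub>v v)"
    then have i: "i < n" using v by simp
    have "(mat_exp M *\<^sub>v v) $ i = (\<Sum>j\<in>{0..<n}. (\<Sum>k. (M ^\<^sub>m k) $$ (i, j) / of_nat (fact k)) * v $ j)"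
      using M v i by (simp add: mat_exp_def scalar_prod_def)
    also have "\<dots> = (\<Sum>j\<in>{0..<n}. \<Sum>k. (M ^\<^sub>m k) $$ (i, j) / of_nat (fact k) * v $ j)"
      using summable_mat_exp_entry[OF M i] by (intro sum.cong refl suminf_mult2) auto
    also have "\<dots> = (\<Sum>k. \<Sum>j\<in>{0..<n}. (M ^\<^sub>m k) $$ (i, j) / of_nat (fact k) * v $ j)"
      using summable_mat_exp_entry[OF M i] by (intro suminf_sum[symmetric] summable_mult2) auto
    also have "\<dots> = (\<Sum>k. ((M ^\<^sub>m k) *\<^sub>v v) $ i / of_nat (fact k))"
      using M v i by (simp add: scalar_prod_def sum_divide_distrib mult.commute)
    also have "\<dots> = (\<Sum>k. v $ i * (\<mu> ^ k /\<^sub>R fact k))"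
      using eigenvector_pow[OF M ev] v i
      by (simp add: scaleR_conv_of_real divide_inverse mult.commute mult.left_commute)
    also have "\<dots> = v $ i * exp \<mu>"
      using sums_unique[OF sums_mult[OF exp_converges[of \<mu>], of "v $ i"]] by simp
    finally show "(mat_exp M *\<^sub>v v) $ i = (exp \<mu> \<cdot>\<^sub>v v) $ i" using i v by simp
  qed (use M v in \<open>simp add: mat_exp_def\<close>)
  ultimately show ?thesis using M by (simp add: eigenvector_def mat_exp_def)
qed

lemma eigenvector_smult_mat:
  assumes "(A :: 'a :: comm_ring_1 mat) \<in> carrier_mat n n" "eigenvector A v \<mu>"
  shows "eigenvector (c \<cdot>\<^sub>m A) v (c * \<mu>)"
proof -
  have "v \<in> carrier_vec n" using assms by (simp add: eigenvector_def)
  then have "(c \<cdot>\<^sub>m A) *\<^sub>v v = c \<cdot>\<^sub>v (A *\<^sub>v v)"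
    using assms(1) by (intro eq_vecI) (auto simp: scalar_prod_def sum_distrib_left mult.assoc)
  then show ?thesis using assms by (auto simp: eigenvector_def smult_smult_assoc)
qed

section \<open>Perfect state transfer on a circulant\<close>

lemma sum_mult_fourier_vec_nth:
  assumes U: "(U :: complex mat) \<in> carrier_mat n n" and w: "w < n"
  shows "(\<Sum>k<n. (U *\<^sub>v fourier_vec n (unit_root n ^ k)) $ w) = of_nat n * U $$ (w, 0)"
proof -
  have "(\<Sum>k<n. (U *\<^sub>v fourier_vec n (unit_root n ^ k)) $ w)
      = (\<Sum>l\<in>{0..<n}. U $$ (w, l) * (\<Sum>k<n. (unit_root n ^ l) ^ k))"
    using U w unfolding sum_distrib_left
    by (subst sum.swap) (simp add: fourier_vec_def scalar_prod_def power_mult[symmetric] mult.commute)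
  also have "\<dots> = (\<Sum>l\<in>{0..<n}. if l = 0 then U $$ (w, 0) * of_nat n else 0)"
    by (intro sum.cong refl) (simp add: sum_powers_unit_root_power)
  also have "\<dots> = of_nat n * U $$ (w, 0)" using w by (simp add: mult.commute)
  finally show ?thesis .
qed

lemma circ_mat_exp_entry:
  assumes w: "w < n"
  shows "of_nat n * mat_exp (c \<cdot>\<^sub>m circ n a) $$ (w, 0)
    = (\<Sum>k<n. exp (c * circ_eigenvalue n a (unit_root n ^ k)) * (unit_root n ^ k) ^ w)"
proof -
  let ?U = "mat_exp (c \<cdot>\<^sub>m circ n a)"
  have U: "?U \<in> carrier_mat n n" by (simp add: mat_exp_def circ_def)
  have "eigenvector ?U (fourier_vec n (unit_root n ^ k)) (exp (c * circ_eigenvalue n a (unit_root n ^ k)))" for k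
    using w by (intro eigenvector_mat_exp[of _ n] eigenvector_smult_mat[of _ n]
        eigenvector_circ_fourier_vec unit_root_power_power_eq_1) auto
  then have "(?U *\<^sub>v fourier_vec n (unit_root n ^ k)) $ w
      = exp (c * circ_eigenvalue n a (unit_root n ^ k)) * (unit_root n ^ k) ^ w" for k
    using w by (simp add: eigenvector_def fourier_vec_def)
  then show ?thesis using sum_mult_fourier_vec_nth[OF U w] by simp
qed

lemma unit_norms_eq_if_norm_sum_eq:
  assumes unit: "\<And>k. k < n \<Longrightarrow> cmod (z k) = 1"
    and sum: "cmod (\<Sum>k<n. z k) = real n" and k: "k < n"
  shows "z k = z 0"
proof -
  define S where "S = (\<Sum>k<n. z k)"
  have S: "cmod S = real n" using sum by (simp add: S_def)
  have norm: "cmod (z k * cnj S) = real n" if "k < n" for k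
    using unit[OF that] S by (simp add: norm_mult)
  have "(\<Sum>k<n. Re (z k * cnj S)) = Re (S * cnj S)"
    unfolding S_def by (simp add: sum_distrib_right)
  also have "\<dots> = real n * real n"
    using S unfolding complex_norm_square[symmetric] by (simp add: power2_eq_square)
  finally have "(\<Sum>k<n. real n - Re (z k * cnj S)) = 0" by (simp add: sum_subtractf)
  moreover have "Re (z k * cnj S) \<le> real n" if "k < n" for k
    using complex_Re_le_cmod[of "z k * cnj S"] norm[OF that] by linarith
  ultimately have re: "Re (z k * cnj S) = real n" if "k < n" for k
    using that by (subst (asm) sum_nonneg_eq_0_iff) auto
  have im: "Im w = 0" if "Re w = cmod w" for w
    using that cmod_power2[of w] by simp
  have scaled: "z k * cnj S = of_nat n" if "k < n" for k
  proof -
    have "z k * cnj S \<in> \<real>" using im re[OF that] norm[OF that] complex_is_Real_iff by metis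
    then have "z k * cnj S = of_real (Re (z k * cnj S))" by (simp only: of_real_Re)
    then show ?thesis by (simp only: re[OF that] of_real_of_nat_eq)
  qed
  have "z k * cnj S = z 0 * cnj S" using scaled[OF k] scaled[of 0] k by simp
  moreover have "cnj S \<noteq> 0" using S k by auto
  ultimately show ?thesis by simp
qed

lemma circ_pst_phases_eq:
  assumes n: "1 < n" and herm: "hermitian_mat (circ n a)" and k: "k < n"
    and pst: "cmod (mat_exp ((- \<i> * complex_of_real t) \<cdot>\<^sub>m circ n a) $$ (1, 0)) = 1"
  shows "exp (- \<i> * t * circ_eigenvalue n a (unit_root n ^ k)) * unit_root n ^ k
    = exp (- \<i> * t * circ_eigenvalue n a 1)"
proof -
  define z where "z k = exp (- \<i> * t * circ_eigenvalue n a (unit_root n ^ k)) * unit_root n ^ k" for k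
  have "(\<Sum>k<n. z k) = of_nat n * mat_exp ((- \<i> * complex_of_real t) \<cdot>\<^sub>m circ n a) $$ (1, 0)"
    unfolding z_def circ_mat_exp_entry[OF n] by simp
  then have "cmod (\<Sum>k<n. z k) = real n" using pst by (simp add: norm_mult)
  moreover have "cmod (z k) = 1" for k
    using circ_eigenvalue_real[OF herm unit_root_power_power_eq_1[of n k]]
    by (simp add: z_def norm_mult norm_exp_eq_Re unit_root_power complex_is_Real_iff)
  ultimately have "z k = z 0" using k by (intro unit_norms_eq_if_norm_sum_eq)
  then show ?thesis by (simp add: z_def)
qed

lemma circ_pst_eigenvalue_progression:
  assumes n: "1 < n" and herm: "hermitian_mat (circ n a)" and t: "t > 0"
    and pst: "cmod (mat_exp ((- \<i> * complex_of_real t) \<cdot>\<^sub>m circ n a) $$ (1, 0)) = 1"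
  obtains c :: real and N :: "nat \<Rightarrow> int" where "c \<noteq> 0"
    "\<And>k. k < n \<Longrightarrow> circ_eigenvalue n a (unit_root n ^ k)
       = circ_eigenvalue n a 1 + of_real c * (of_nat k - of_nat n * of_int (N k))"
proof -
  define r where "r k = Re (circ_eigenvalue n a (unit_root n ^ k))" for k
  have eigenvalue: "circ_eigenvalue n a (unit_root n ^ k) = of_real (r k)" for k
    unfolding r_def using circ_eigenvalue_real[OF herm unit_root_power_power_eq_1] by simp
  have eigenvalue_0: "circ_eigenvalue n a 1 = of_real (r 0)" using eigenvalue[of 0] by simp
  have "cis (2 * pi * real k / real n - t * r k + t * r 0) = 1" if "k < n" for k
  proof -
    have "cis (2 * pi * real k / real n - t * r k) = cis (- (t * r k)) * unit_root n ^ k"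
      by (simp add: unit_root_power cis_mult)
    also have "\<dots> = exp (- \<i> * t * of_real (r k)) * unit_root n ^ k"
      by (simp add: cis_conv_exp mult_ac)
    also have "\<dots> = exp (- \<i> * t * of_real (r 0))"
      using circ_pst_phases_eq[OF n herm that pst] unfolding eigenvalue eigenvalue_0 .
    also have "\<dots> = cis (- (t * r 0))" by (simp add: cis_conv_exp mult_ac)
    finally have "cis (2 * pi * real k / real n - t * r k) * cis (t * r 0)
        = cis (- (t * r 0)) * cis (t * r 0)" by simp
    then show ?thesis by (simp only: cis_mult) simp
  qed
  then have "\<forall>k\<in>{..<n}. \<exists>m :: int. 2 * pi * real k / real n - t * r k + t * r 0 = 2 * pi * real_of_int m"
    using cis_eq_1_imp_multiple_2pi by (metis lessThan_iff)
  then obtain N :: "nat \<Rightarrow> int" where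
    N: "\<forall>k\<in>{..<n}. 2 * pi * real k / real n - t * r k + t * r 0 = 2 * pi * real_of_int (N k)"
    by (erule bchoice[THEN exE])
  define c where "c = 2 * pi / (real n * t)"
  show ?thesis
  proof (rule that)
    show "c \<noteq> 0" unfolding c_def using t n by simp
    fix k assume "k < n"
    then have "r k = r 0 + c * (real k - real n * real_of_int (N k))"
      using N t n unfolding c_def by (simp add: field_simps)
    then show "circ_eigenvalue n a (unit_root n ^ k)
        = circ_eigenvalue n a 1 + of_real c * (of_nat k - of_nat n * of_int (N k))"
      unfolding eigenvalue eigenvalue_0 by simp
  qed
qed

section \<open>Integer combinations of powers of a root of unity\<close>

(* For z ^ n = 1 and n > 0 this is the ring \<int>[z]. *)
definition int_powers :: "nat \<Rightarrow> complex \<Rightarrow> complex set" where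
  "int_powers n z = range (\<lambda>c :: nat \<Rightarrow> int. \<Sum>e<n. of_int (c e) * z ^ e)"

lemma int_powers_of_int_mult_power:
  assumes z: "z ^ n = 1" and n: "n > 0"
  shows "of_int c * z ^ k \<in> int_powers n z"
proof -
  have "(\<Sum>e<n. of_int (if e = k mod n then c else 0) * z ^ e)
      = (\<Sum>e<n. if e = k mod n then of_int c * z ^ e else 0)"
    by (intro sum.cong) auto
  also have "\<dots> = of_int c * z ^ k"
    using n power_mod_eq_if_power_eq_1[OF z] by simp
  finally show ?thesis unfolding int_powers_def
    by (intro range_eqI[of _ _ "\<lambda>e. if e = k mod n then c else 0"]) simp
qed

lemma int_powers_of_int: "z ^ n = 1 \<Longrightarrow> n > 0 \<Longrightarrow> of_int c \<in> int_powers n z"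
  using int_powers_of_int_mult_power[of z n c 0] by simp

lemma int_powers_add:
  assumes "x \<in> int_powers n z" "y \<in> int_powers n z"
  shows "x + y \<in> int_powers n z"
proof -
  obtain c d where "x = (\<Sum>e<n. of_int (c e) * z ^ e)" "y = (\<Sum>e<n. of_int (d e) * z ^ e)"
    using assms unfolding int_powers_def by blast
  then have "x + y = (\<Sum>e<n. of_int (c e + d e) * z ^ e)"
    by (simp add: sum.distrib distrib_right)
  then show ?thesis unfolding int_powers_def by (intro range_eqI[of _ _ "\<lambda>e. c e + d e"])
qed

lemma int_powers_sum:
  assumes "\<And>i. i \<in> A \<Longrightarrow> f i \<in> int_powers n z"
  shows "(\<Sum>i\<in>A. f i) \<in> int_powers n z"
proof -
  have "0 \<in> int_powers n z"
    unfolding int_powers_def by (rule range_eqI[of _ _ "\<lambda>_. 0"]) simp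
  then show ?thesis
    using assms by (induction A rule: infinite_finite_induct) (auto intro: int_powers_add)
qed

lemma int_powers_mult:
  assumes z: "z ^ n = 1" and n: "n > 0"
    and "x \<in> int_powers n z" "y \<in> int_powers n z"
  shows "x * y \<in> int_powers n z"
proof -
  obtain c d where xy: "x = (\<Sum>e<n. of_int (c e) * z ^ e)" "y = (\<Sum>e<n. of_int (d e) * z ^ e)"
    using assms unfolding int_powers_def by blast
  have "x * y = (\<Sum>e<n. \<Sum>e'<n. of_int (c e * d e') * z ^ (e + e'))"
    unfolding xy sum_product by (intro sum.cong refl) (simp add: power_add mult_ac)
  also have "\<dots> \<in> int_powers n z"
    by (intro int_powers_sum int_powers_of_int_mult_power[OF z n])
  finally show ?thesis .
qed

lemma int_powers_power:
  assumes "z ^ n = 1" "n > 0" "x \<in> int_powers n z"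
  shows "x ^ k \<in> int_powers n z"
  by (induction k) (use assms int_powers_of_int[of z n 1] int_powers_mult in auto)

lemma det_cong:
  assumes A: "(A :: int mat) \<in> carrier_mat m m" and B: "B \<in> carrier_mat m m"
    and cong: "\<And>i j. i < m \<Longrightarrow> j < m \<Longrightarrow> [A $$ (i, j) = B $$ (i, j)] (mod q)"
  shows "[det A = det B] (mod q)"
  unfolding det_def'[OF A] det_def'[OF B]
proof (rule cong_sum, rule cong_mult[OF cong_refl], rule cong_prod)
  fix \<pi> i assume "\<pi> \<in> {\<pi>. \<pi> permutes {0..<m}}" "i \<in> {0..<m}"
  then show "[A $$ (i, \<pi> i) = B $$ (i, \<pi> i)] (mod q)"
    using cong permutes_in_image by fastforce
qed

lemma det_neq_0_if_cong_neg_one_mat: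
  assumes B: "(B :: int mat) \<in> carrier_mat m m" and q: "prime q"
    and cong: "\<And>i j. i < m \<Longrightarrow> j < m \<Longrightarrow> [B $$ (i, j) = (if i = j then -1 else 0)] (mod q)"
  shows "det B \<noteq> 0"
proof
  assume "det B = 0"
  moreover have "[det B = det ((-1) \<cdot>\<^sub>m (1\<^sub>m m :: int mat))] (mod q)"
  proof (rule det_cong[OF B])
    fix i j assume "i < m" "j < m"
    then show "[B $$ (i, j) = ((-1) \<cdot>\<^sub>m (1\<^sub>m m :: int mat)) $$ (i, j)] (mod q)"
      using cong[of i j] by (cases "i = j") simp_all
  qed simp
  ultimately have "q dvd (-1) ^ m" by (simp add: cong_def mod_eq_0_iff_dvd[symmetric])
  then have "q dvd 1" by (metis dvd_minus_iff neg_one_even_power neg_one_odd_power)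
  then show False using q by (simp add: prime_int_iff)
qed

(* If p x = 1 with x = \<Sum>_e c_e z^e, then z is a root of \<Sum>_e (p c_e - [e = 0]) X^e, so the integer
   circulant with these coefficients is singular; but it is congruent to -1 modulo p. *)
lemma prime_mult_int_powers_neq_1:
  assumes z: "z ^ n = 1" and n: "n > 0" and p: "prime p" and x: "x \<in> int_powers n z"
  shows "of_nat p * x \<noteq> 1"
proof
  assume px: "of_nat p * x = 1"
  obtain c where x_eq: "x = (\<Sum>e<n. of_int (c e) * z ^ e)" using x unfolding int_powers_def by blast
  define b where "b e = int p * c e - (if e = 0 then 1 else 0)" for e
  let ?a = "\<lambda>e. of_int (b e) :: complex"
  have "circ_eigenvalue n ?a z = of_nat p * x - (\<Sum>e<n. if e = 0 then z ^ e else 0)"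
    unfolding circ_eigenvalue_def x_eq b_def sum_distrib_left sum_subtractf[symmetric]
    by (intro sum.cong refl) (simp add: algebra_simps)
  then have "circ_eigenvalue n ?a z = 0" using px n by simp
  then have "circ n ?a *\<^sub>v fourier_vec n z = 0\<^sub>v n"
    using circ_mult_fourier_vec[OF z, of ?a] by (intro eq_vecI) (auto simp: fourier_vec_def)
  then have "det (circ n ?a) = 0"
    unfolding det_0_iff_vec_prod_zero[OF circ_carrier_mat] using fourier_vec_neq_0[OF n]
    by (intro exI[of _ "fourier_vec n z"]) (simp add: fourier_vec_def)
  moreover have "circ n ?a = map_mat of_int (mat n n (\<lambda>(j, k). b ((k + n - j) mod n)))"
    unfolding circ_def by auto
  ultimately have "det (mat n n (\<lambda>(j, k). b ((k + n - j) mod n))) = 0"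
    by (simp add: of_int_hom.hom_det)
  moreover have "det (mat n n (\<lambda>(j, k). b ((k + n - j) mod n))) \<noteq> 0"
  proof (rule det_neq_0_if_cong_neg_one_mat)
    show "prime (int p)" using p by simp
    fix i j assume "i < n" "j < n"
    moreover have "[int p * y - 1 = - 1] (mod int p)" for y
      by (simp add: cong_iff_dvd_diff)
    ultimately show "[mat n n (\<lambda>(j, k). b ((k + n - j) mod n)) $$ (i, j)
        = (if i = j then - 1 else 0)] (mod int p)"
      by (auto simp: b_def add_diff_mod_eq_0_iff cong_mult_self_left)
  qed simp
  ultimately show False by contradiction
qed

lemma prime_dvd_choose_prime_power:
  assumes p: "prime (p :: nat)" and i: "0 < i" "i < p ^ m"
  shows "p dvd (p ^ m choose i)"
proof (rule ccontr)
  assume "\<not> p dvd (p ^ m choose i)"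
  then have "coprime (p ^ m) (p ^ m choose i)" using p by (simp add: prime_imp_coprime)
  moreover have "p ^ m dvd i * (p ^ m choose i)"
    using times_binomial_minus1_eq[OF i(1), of "p ^ m"] by simp
  ultimately have "p ^ m dvd i" by (metis coprime_dvd_mult_left_iff)
  then show False using i by (simp add: nat_dvd_not_less)
qed

lemma sub_one_power_eq_prime_mult:
  assumes p: "prime p" and n: "n = p ^ m" "m > 0" and z: "z ^ n = 1"
  obtains G where "G \<in> int_powers n z" "(z - 1) ^ n = of_nat p * G"
proof -
  have n0: "n > 0" using p n by (simp add: prime_gt_0_nat)
  define T where "T i = of_nat (n choose i) * z ^ i * (-1) ^ (n - i)" for i
  have "(z - 1) ^ n = (\<Sum>i\<le>n. T i)"
    unfolding T_def using binomial_ring[of z "-1" n] by simp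
  also have "{..n} = insert 0 (insert n {1..<n})" using n0 by auto
  also have "(\<Sum>i\<in>insert 0 (insert n {1..<n}). T i) = T 0 + T n + (\<Sum>i\<in>{1..<n}. T i)"
    using n0 by (simp add: add.assoc)
  finally have expand: "(z - 1) ^ n = T 0 + T n + (\<Sum>i\<in>{1..<n}. T i)" .
  have "\<exists>q. n choose i = p * q" if "i \<in> {1..<n}" for i
    using prime_dvd_choose_prime_power[OF p, of i m] that n by auto
  then obtain Q where Q: "\<And>i. i \<in> {1..<n} \<Longrightarrow> n choose i = p * Q i" by metis
  obtain e :: int where e: "T 0 + T n = of_nat p * of_int e"
  proof (cases "p = 2")
    case True
    then have "even n" using n by simp
    then show ?thesis using that[of 1] z True by (simp add: T_def)
  next
    case False
    then have "odd n" using n p prime_odd_nat prime_ge_2_nat by (simp add: le_neq_implies_less)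
    then show ?thesis using that[of 0] z by (simp add: T_def)
  qed
  define G where "G = of_int e + (\<Sum>i\<in>{1..<n}. of_int (int (Q i) * (-1) ^ (n - i)) * z ^ i)"
  show ?thesis
  proof (rule that)
    show "G \<in> int_powers n z" unfolding G_def
      by (intro int_powers_add int_powers_of_int[OF z n0] int_powers_sum
          int_powers_of_int_mult_power[OF z n0])
    have "(\<Sum>i\<in>{1..<n}. T i) = of_nat p * (\<Sum>i\<in>{1..<n}. of_int (int (Q i) * (-1) ^ (n - i)) * z ^ i)"
      unfolding sum_distrib_left using Q by (intro sum.cong) (auto simp: T_def)
    then show "(z - 1) ^ n = of_nat p * G"
      unfolding expand e G_def by (simp add: distrib_left)
  qed
qed

(* (z - 1)^(p^m) lies in p \<int>[z], and p is not a unit of \<int>[z]. *)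
lemma sub_one_mult_int_powers_neq_1:
  assumes p: "prime p" and n: "n = p ^ m" "m > 0" and z: "z ^ n = 1"
    and x: "x \<in> int_powers n z"
  shows "(z - 1) * x \<noteq> 1"
proof
  assume inv: "(z - 1) * x = 1"
  have n0: "n > 0" using p n by (simp add: prime_gt_0_nat)
  obtain G where G: "G \<in> int_powers n z" "(z - 1) ^ n = of_nat p * G"
    using sub_one_power_eq_prime_mult[OF p n z] by blast
  have "of_nat p * (G * x ^ n) = ((z - 1) * x) ^ n"
    using G(2) by (simp add: power_mult_distrib mult.assoc)
  also have "\<dots> = 1" using inv by simp
  finally show False
    using prime_mult_int_powers_neq_1[OF z n0 p] int_powers_mult[OF z n0 G(1)]
      int_powers_power[OF z n0 x] by blast
qed

lemma progression_fourier_sum_neq_0: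
  fixes \<mu> :: "nat \<Rightarrow> complex" and N :: "nat \<Rightarrow> int"
  assumes p: "prime p" and n: "n = p ^ m" "m > 0"
    and z: "z ^ n = 1" "z \<noteq> 1" and c: "c \<noteq> 0"
    and \<mu>: "\<And>k. k < n \<Longrightarrow> \<mu> k = b + c * (of_nat k - of_nat n * of_int (N k))"
  shows "(\<Sum>k<n. \<mu> k * z ^ k) \<noteq> 0"
proof
  assume sum0: "(\<Sum>k<n. \<mu> k * z ^ k) = 0"
  define K where "K = (\<Sum>k<n. of_nat k * z ^ k)"
  define M where "M = (\<Sum>k<n. of_int (N k) * z ^ k)"
  have "(\<Sum>k<n. \<mu> k * z ^ k) = (\<Sum>k<n. b * z ^ k + c * (of_nat k * z ^ k) - c * of_nat n * (of_int (N k) * z ^ k))"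
    by (intro sum.cong refl) (simp add: \<mu> algebra_simps)
  also have "\<dots> = b * (\<Sum>k<n. z ^ k) + c * (K - of_nat n * M)"
    unfolding K_def M_def by (simp add: sum.distrib sum_subtractf sum_distrib_left algebra_simps)
  finally have "K = of_nat n * M" using sum0 c sum_powers_root_of_unity[OF z] by simp
  then have "of_nat n * ((z - 1) * M) = of_nat n"
    using sub_one_mult_sum_index_powers[OF z] unfolding K_def by (simp add: mult_ac)
  moreover have "n > 0" using p n by (simp add: prime_gt_0_nat)
  ultimately have "(z - 1) * M = 1" by simp
  moreover have "M \<in> int_powers n z" unfolding M_def int_powers_def by (rule rangeI)
  ultimately show False using sub_one_mult_int_powers_neq_1[OF p n z(1)] by blast
qed

theorem lemma7:
  fixes p n :: nat and a :: "nat \<Rightarrow> complex"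
  assumes "prime p" and "n = p ^ 2"
    and "hermitian_mat (circ n a)"
    and "universal_PST (circ n a)"
  shows "\<forall>j. 0 < j \<and> j < n \<longrightarrow> a j \<noteq> 0"
proof (intro allI impI notI)
  fix j assume j: "0 < j \<and> j < n" and a_j: "a j = 0"
  have "1 < n" using j by simp
  obtain t :: real where t: "t > 0"
    and pst: "cmod (mat_exp ((- \<i> * complex_of_real t) \<cdot>\<^sub>m circ n a) $$ (1, 0)) = 1"
    using assms(4) \<open>1 < n\<close> unfolding universal_PST_def by (auto simp: circ_def)
  obtain c N where "c \<noteq> 0" and progression: "\<And>k. k < n \<Longrightarrow> circ_eigenvalue n a (unit_root n ^ k)
      = circ_eigenvalue n a 1 + of_real c * (of_nat k - of_nat n * of_int (N k))"
    using circ_pst_eigenvalue_progression[OF \<open>1 < n\<close> assms(3) t pst] by blast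
  let ?\<zeta> = "unit_root n ^ (n - j)"
  have "?\<zeta> \<noteq> 1" using j by (simp add: unit_root_power_eq_1_iff nat_dvd_not_less)
  then have "(\<Sum>k<n. circ_eigenvalue n a (unit_root n ^ k) * ?\<zeta> ^ k) \<noteq> 0"
    using assms(1,2) \<open>c \<noteq> 0\<close> progression
    by (intro progression_fourier_sum_neq_0[where m = 2]) (auto simp: unit_root_power_power_eq_1)
  then show False using circ_eigenvalue_inversion[of j n a] j a_j by simp
qed

end
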